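(* Let $h\ge 3$ and let $W\in\mathcal W^2_{h\times 3}$ be $2$-full. Then: (i) $W[1]=(\blacksquare,\blacksquare,\blacksquare)$ and $W[2]=(\blacksquare,\square,\blacksquare)$; (ii) if $W$ is atomic, then $|W[i]|_\blacksquare=2$ for all $1<i<h$; (iii) if $W$ is atomic, there are no $i$ with $1<i<h-1$ and $j\in\{1,2\}$ such that the four cells $(i,j),(i,j+1),(i+1,j),(i+1,j+1)$ are all filled; (iv) if $W$ is atomic, neither column $W^t[1]$ nor column $W^t[3]$ contains two vertically consecutive empty cells.
   Context: A 2-dimensional binary word of dimensions $h\times w$ is an $h\times w$ matrix $W$ with entries in $\{\square,\blacksquare\}$; entries $\blacksquare$ are filled cells, entries $\square$ empty cells, and $|U|_\blacksquare$ is the number of filled cells of $U$. Two cells $(i,j),(i',j')$ are adjacent if $|i-i'|+|j-j'|=1$; the degree of a filled cell is the number of filled cells adjacent to it. $\mathcal W^2_{h\times w}$ is the set of $h\times w$ binary words in which every filled cell has degree at most $2$; $W\in\mathcal W^2_{h\times w}$ is $2$-full if $|W|_\blacksquare$ is maximal among words of $\mathcal W^2_{h\times w}$. $W[i]$ denotes the $i$-th row of $W$ and $W^t[j]$ its $j$-th column. A word $W\in\mathcal W^2_{h\times w}$ is atomic if no row of $W$ consists only of empty cells. *)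

theory Defs
  imports Main
begin

text \<open>A 2-dimensional binary word of dimensions h x w is modelled as a function
  W :: nat => nat => bool, where W i j = True means the cell (i,j) is filled.
  Rows are indexed 1..h and columns 1..w (as in the paper); values outside this
  range are irrelevant.\<close>

type_synonym word2d = "nat \<Rightarrow> nat \<Rightarrow> bool"

definition cells :: "nat \<Rightarrow> nat \<Rightarrow> (nat \<times> nat) set" where
  "cells h w = {1..h} \<times> {1..w}"

definition adjacent :: "nat \<times> nat \<Rightarrow> nat \<times> nat \<Rightarrow> bool" where
  "adjacent c c' \<longleftrightarrow>
     \<bar>int (fst c) - int (fst c')\<bar> + \<bar>int (snd c) - int (snd c')\<bar> = 1"

definition filled_count :: "nat \<Rightarrow> nat \<Rightarrow> word2d \<Rightarrow> nat" where
  "filled_count h w W = card {c \<in> cells h w. W (fst c) (snd c)}"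

definition degree :: "nat \<Rightarrow> nat \<Rightarrow> word2d \<Rightarrow> nat \<times> nat \<Rightarrow> nat" where
  "degree h w W c = card {c' \<in> cells h w. W (fst c') (snd c') \<and> adjacent c c'}"

definition in_W2 :: "nat \<Rightarrow> nat \<Rightarrow> word2d \<Rightarrow> bool" where
  "in_W2 h w W \<longleftrightarrow> (\<forall>c \<in> cells h w. W (fst c) (snd c) \<longrightarrow> degree h w W c \<le> 2)"

definition two_full :: "nat \<Rightarrow> nat \<Rightarrow> word2d \<Rightarrow> bool" where
  "two_full h w W \<longleftrightarrow> in_W2 h w W \<and>
     (\<forall>V. in_W2 h w V \<longrightarrow> filled_count h w V \<le> filled_count h w W)"

definition atomic :: "nat \<Rightarrow> nat \<Rightarrow> word2d \<Rightarrow> bool" where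
  "atomic h w W \<longleftrightarrow> (\<forall>i \<in> {1..h}. \<exists>j \<in> {1..w}. W i j)"

definition row_count :: "nat \<Rightarrow> word2d \<Rightarrow> nat \<Rightarrow> nat" where
  "row_count w W i = card {j \<in> {1..w}. W i j}"

end

theory Submission
  imports Defs
begin

(* Read row by row, a word of width 3 is a sequence of rows r_1, ..., r_h, padded by empty
   rows r_0 and r_(h+1), and the degree condition says that every three consecutive rows form
   an admissible triple. A potential tau on pairs of consecutive rows satisfies
   |c| + tau(b, c) <= tau(a, b) + 2 for every admissible triple (a, b, c). Telescoping, the rows
   below row n have at most 2(h - n) + tau(r_(n-1), r_n) filled cells and, admissibility being
   symmetric, the rows above row n at most 2(n - 1) + tau(r_(n+1), r_n). The frame of the
   h x 3 rectangle has 2h + 2 filled cells, so in a 2-full word these bounds are almost tight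
   at every row n:
     2n + 2 <= |r_1| + ... + |r_n| + tau(r_(n-1), r_n)  and
     4 <= |r_n| + tau(r_(n-1), r_n) + tau(r_(n+1), r_n).
   Each of (i)-(iv) is then a finite check on two or three consecutive rows. *)

type_synonym row = "bool \<times> bool \<times> bool"

definition empty_row :: row where
  "empty_row = (False, False, False)"

fun row_card :: "row \<Rightarrow> nat" where
  "row_card (x, y, z) = of_bool x + of_bool y + of_bool z"

fun admissible_rows :: "row \<Rightarrow> row \<Rightarrow> row \<Rightarrow> bool" where
  "admissible_rows (a1, a2, a3) (b1, b2, b3) (c1, c2, c3) \<longleftrightarrow>
     (b1 \<longrightarrow> of_bool a1 + of_bool b2 + of_bool c1 \<le> (2::nat)) \<and>
     (b2 \<longrightarrow> of_bool a2 + of_bool b1 + of_bool b3 + of_bool c2 \<le> (2::nat)) \<and>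
     (b3 \<longrightarrow> of_bool a3 + of_bool b2 + of_bool c3 \<le> (2::nat))"

definition word_row :: "nat \<Rightarrow> word2d \<Rightarrow> nat \<Rightarrow> row" where
  "word_row h W i = (if i \<in> {1..h} then (W i 1, W i 2, W i 3) else empty_row)"

lemma adjacent_iff_neighbour:
  assumes "1 \<le> i" "1 \<le> j"
  shows "adjacent (i, j) c \<longleftrightarrow> c \<in> {(i - 1, j), (i + 1, j), (i, j - 1), (i, j + 1)}"
  using assms by (cases c) (auto simp: adjacent_def)

lemma degree_eq_length_filter:
  assumes "1 \<le> i" "1 \<le> j"
  shows "degree h w W (i, j) =
    length (filter (\<lambda>c. c \<in> cells h w \<and> W (fst c) (snd c))
      [(i - 1, j), (i + 1, j), (i, j - 1), (i, j + 1)])"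
proof -
  have "{c \<in> cells h w. W (fst c) (snd c) \<and> adjacent (i, j) c} =
      {c. c \<in> cells h w \<and> W (fst c) (snd c)} \<inter> set [(i - 1, j), (i + 1, j), (i, j - 1), (i, j + 1)]"
    using adjacent_iff_neighbour[OF assms] by auto
  moreover have "distinct [(i - 1, j), (i + 1, j), (i, j - 1), (i, j + 1)]"
    using assms by auto
  ultimately show ?thesis
    unfolding degree_def by (simp add: distinct_length_filter)
qed

lemma in_W2_width_3_iff:
  "in_W2 h 3 W \<longleftrightarrow>
     (\<forall>i\<in>{1..h}. admissible_rows (word_row h W (i - 1)) (word_row h W i) (word_row h W (Suc i)))"
proof -
  have "{1..3::nat} = {1, 2, 3}" by auto
  then have "in_W2 h 3 W \<longleftrightarrow> (\<forall>i\<in>{1..h}. \<forall>j\<in>{1, 2, 3}. W i j \<longrightarrow> degree h 3 W (i, j) \<le> 2)"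
    unfolding in_W2_def cells_def by auto
  also have "\<dots> \<longleftrightarrow>
      (\<forall>i\<in>{1..h}. admissible_rows (word_row h W (i - 1)) (word_row h W i) (word_row h W (Suc i)))"
  proof (rule ball_cong[OF refl])
    fix i assume "i \<in> {1..h}"
    then show "(\<forall>j\<in>{1, 2, 3}. W i j \<longrightarrow> degree h 3 W (i, j) \<le> 2) \<longleftrightarrow>
        admissible_rows (word_row h W (i - 1)) (word_row h W i) (word_row h W (Suc i))"
      by (cases "i = 1"; cases "i = h")
        (auto simp: degree_eq_length_filter cells_def word_row_def empty_row_def
          numeral_2_eq_2 numeral_3_eq_3)
  qed
  finally show ?thesis .
qed

lemma filled_count_eq_sum_row_count:
  "filled_count h w W = (\<Sum>i=1..h. row_count w W i)"
proof -
  have "{c \<in> cells h w. W (fst c) (snd c)} = Sigma {1..h} (\<lambda>i. {j \<in> {1..w}. W i j})"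
    unfolding cells_def by auto
  then show ?thesis
    unfolding filled_count_def row_count_def by simp
qed

lemma word_row_eq: "i \<in> {1..h} \<Longrightarrow> word_row h W i = (W i 1, W i 2, W i 3)"
  by (simp add: word_row_def)

lemma row_count_3_eq_row_card:
  assumes "i \<in> {1..h}"
  shows "row_count 3 W i = row_card (word_row h W i)"
proof -
  have "{j \<in> {1..3}. W i j} = {x. W i x} \<inter> set [1, 2, 3]" by auto
  then show ?thesis
    using assms by (simp add: row_count_def word_row_def distinct_length_filter)
qed

lemma filled_count_width_3:
  "filled_count h 3 W = (\<Sum>i=1..h. row_card (word_row h W i))"
  unfolding filled_count_eq_sum_row_count
  by (rule sum.cong) (simp_all add: row_count_3_eq_row_card)

(* The least solution of tail_excess_step, found by dynamic programming over admissible row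
   sequences; the value 2 after an empty row accounts for a new frame starting below it. *)
fun tail_excess :: "row \<Rightarrow> row \<Rightarrow> nat" where
  "tail_excess (a1, a2, a3) b =
     (if b = empty_row then 2
      else if b = (True, True, True) \<and> (a1 \<or> a2 \<or> a3)
           \<or> b = (False, True, True) \<and> a2 \<and> a3
           \<or> b = (True, True, False) \<and> a1 \<and> a2 then 0
      else 1)"

lemma admissible_rows_sym: "admissible_rows a b c \<longleftrightarrow> admissible_rows c b a"
  by (cases a; cases b; cases c) auto

lemma tail_excess_step:
  assumes "admissible_rows a b c"
  shows "row_card c + tail_excess b c \<le> tail_excess a b + 2"
  using assms by (cases a; cases b; cases c) (auto simp: empty_row_def)

lemma tail_bound:
  assumes "n \<le> h" and "\<forall>i. n \<le> i \<and> i < h \<longrightarrow> admissible_rows (r (i - 1)) (r i) (r (Suc i))"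
  shows "(\<Sum>i=Suc n..h. row_card (r i)) \<le> 2 * (h - n) + tail_excess (r (n - 1)) (r n)"
  using assms
proof (induction n rule: inc_induct)
  case base
  then show ?case by simp
next
  case (step m)
  have "(\<Sum>i=Suc m..h. row_card (r i)) = row_card (r (Suc m)) + (\<Sum>i=Suc (Suc m)..h. row_card (r i))"
    using step.hyps by (simp add: sum.atLeast_Suc_atMost)
  also have "\<dots> \<le> row_card (r (Suc m)) + tail_excess (r m) (r (Suc m)) + 2 * (h - Suc m)"
    using step.IH step.prems by auto
  also have "\<dots> \<le> 2 * (h - m) + tail_excess (r (m - 1)) (r m)"
    using tail_excess_step[of "r (m - 1)" "r m" "r (Suc m)"] step.hyps step.prems by auto
  finally show ?case .
qed

lemma head_bound:
  assumes "\<forall>i. 1 < i \<and> i \<le> n \<longrightarrow> admissible_rows (r (i - 1)) (r i) (r (Suc i))"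
  shows "(\<Sum>i=1..<n. row_card (r i)) \<le> 2 * (n - 1) + tail_excess (r (Suc n)) (r n)"
proof (cases "n = 0")
  case True
  then show ?thesis by simp
next
  case False
  define r' where "r' i = r (Suc n - i)" for i
  have "admissible_rows (r' (i - 1)) (r' i) (r' (Suc i))" if "1 \<le> i" "i < n" for i
  proof -
    have "1 < Suc n - i" "Suc n - i \<le> n"
      using that by arith+
    then have "admissible_rows (r (Suc n - i - 1)) (r (Suc n - i)) (r (Suc (Suc n - i)))"
      using assms by blast
    moreover have "r' (i - 1) = r (Suc (Suc n - i))" "r' (Suc i) = r (Suc n - i - 1)"
      using that by (simp_all add: r'_def Suc_diff_le)
    ultimately show ?thesis
      using admissible_rows_sym by (simp add: r'_def)
  qed
  then have "(\<Sum>i=Suc 1..n. row_card (r' i)) \<le> 2 * (n - 1) + tail_excess (r' 0) (r' 1)"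
    using tail_bound[of 1 n r'] False by auto
  moreover have "(\<Sum>i=Suc 1..n. row_card (r' i)) = (\<Sum>i=1..<n. row_card (r i))"
    by (rule sum.reindex_bij_witness[where i="\<lambda>i. Suc n - i" and j="\<lambda>i. Suc n - i"])
      (auto simp: r'_def)
  ultimately show ?thesis
    by (simp add: r'_def)
qed

lemma prefix_tight:
  assumes adm: "\<forall>i\<in>{1..h}. admissible_rows (r (i - 1)) (r i) (r (Suc i))"
    and big: "2 * h + 2 \<le> (\<Sum>i=1..h. row_card (r i))"
    and "1 \<le> n" "n \<le> h"
  shows "2 * n + 2 \<le> (\<Sum>i=1..n. row_card (r i)) + tail_excess (r (n - 1)) (r n)"
proof -
  have "{1..h} = {1..n} \<union> {Suc n..h}"
    using \<open>n \<le> h\<close> by auto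
  then have "(\<Sum>i=1..h. row_card (r i)) = (\<Sum>i=1..n. row_card (r i)) + (\<Sum>i=Suc n..h. row_card (r i))"
    by (simp add: sum.union_disjoint)
  moreover have "(\<Sum>i=Suc n..h. row_card (r i)) \<le> 2 * (h - n) + tail_excess (r (n - 1)) (r n)"
    using tail_bound[of n h r] adm assms(3,4) by auto
  ultimately show ?thesis
    using big \<open>n \<le> h\<close> by linarith
qed

lemma row_tight:
  assumes adm: "\<forall>i\<in>{1..h}. admissible_rows (r (i - 1)) (r i) (r (Suc i))"
    and big: "2 * h + 2 \<le> (\<Sum>i=1..h. row_card (r i))"
    and "1 \<le> n" "n \<le> h"
  shows "4 \<le> row_card (r n) + tail_excess (r (n - 1)) (r n) + tail_excess (r (Suc n)) (r n)"
proof -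
  have "(\<Sum>i=1..n. row_card (r i)) = (\<Sum>i=1..<n. row_card (r i)) + row_card (r n)"
    using \<open>1 \<le> n\<close> by (simp add: atLeastLessThanSuc_atLeastAtMost[symmetric] sum.atLeastLessThan_Suc)
  moreover have "(\<Sum>i=1..<n. row_card (r i)) \<le> 2 * (n - 1) + tail_excess (r (Suc n)) (r n)"
    using head_bound[of n r] adm \<open>n \<le> h\<close> by auto
  ultimately show ?thesis
    using prefix_tight[OF adm big assms(3,4)] \<open>1 \<le> n\<close> by linarith
qed

lemma tight_first_row:
  assumes "4 \<le> row_card b + tail_excess empty_row b"
  shows "b = (True, True, True)"
  using assms by (cases b) (auto simp: empty_row_def of_bool_def split: if_splits)

lemma tight_second_row:
  assumes "admissible_rows empty_row (True, True, True) b"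
    and "3 \<le> row_card b + tail_excess (True, True, True) b"
  shows "b = (True, False, True)"
  using assms by (cases b) (auto simp: empty_row_def of_bool_def split: if_splits)

lemma tight_interior_row_card:
  assumes "4 \<le> row_card b + tail_excess a b + tail_excess c b"
    and "a \<noteq> empty_row" "b \<noteq> empty_row" "c \<noteq> empty_row"
  shows "row_card b = 2"
  using assms by (cases a; cases b; cases c) (auto simp: empty_row_def of_bool_def split: if_splits)

lemma tight_no_square:
  assumes "4 \<le> row_card b + tail_excess a b + tail_excess c b"
    and "row_card a = 2" "row_card b = 2"
    and "a = (a1, a2, a3)" "b = (b1, b2, b3)"
  shows "\<not> (a1 \<and> a2 \<and> b1 \<and> b2) \<and> \<not> (a2 \<and> a3 \<and> b2 \<and> b3)"
  using assms by (cases c) (auto simp: empty_row_def of_bool_def split: if_splits)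

lemma tight_no_side_gap:
  assumes "4 \<le> row_card b + tail_excess a b + tail_excess c b"
    and "row_card a = 2" "b \<noteq> empty_row"
    and "a = (a1, a2, a3)" "b = (b1, b2, b3)"
  shows "(a1 \<or> b1) \<and> (a3 \<or> b3)"
  using assms by (cases c) (auto simp: empty_row_def of_bool_def split: if_splits)

definition frame_word :: "nat \<Rightarrow> word2d" where
  "frame_word h i j \<longleftrightarrow> j \<noteq> 2 \<or> i = 1 \<or> i = h"

lemma in_W2_frame_word:
  assumes "3 \<le> h"
  shows "in_W2 h 3 (frame_word h)"
  unfolding in_W2_width_3_iff
  using assms by (auto simp: word_row_def frame_word_def empty_row_def)

lemma filled_count_frame_word:
  assumes "2 \<le> h"
  shows "filled_count h 3 (frame_word h) = 2 * h + 2"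
proof -
  have "row_count 3 (frame_word h) i = 2 + (of_bool (i = 1) + of_bool (i = h))"
    if "i \<in> {1..h}" for i
    unfolding row_count_3_eq_row_card[OF that]
    using that assms by (simp add: word_row_eq frame_word_def)
  then have "filled_count h 3 (frame_word h) =
      (\<Sum>i=1..h. 2 + (of_bool (i = 1) + of_bool (i = h)))"
    by (simp add: filled_count_eq_sum_row_count)
  also have "\<dots> = (\<Sum>i=1..h. 2) + ((\<Sum>i=1..h. of_bool (i = 1)) + (\<Sum>i=1..h. of_bool (i = h)))"
    by (simp only: sum.distrib)
  also have "\<dots> = 2 * h + 2"
    using assms by (simp add: of_bool_def sum.delta)
  finally show ?thesis .
qed

lemma two_full_width_3_filled_count:
  assumes "3 \<le> h" "two_full h 3 W"
  shows "2 * h + 2 \<le> filled_count h 3 W"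
proof -
  have "filled_count h 3 (frame_word h) \<le> filled_count h 3 W"
    using assms in_W2_frame_word unfolding two_full_def by blast
  then show ?thesis
    using assms(1) filled_count_frame_word by simp
qed

locale two_full_width_3 =
  fixes h :: nat and W :: word2d
  assumes height: "3 \<le> h" and two_full: "two_full h 3 W"
begin

lemma word_rows_admissible:
  "\<forall>i\<in>{1..h}. admissible_rows (word_row h W (i - 1)) (word_row h W i) (word_row h W (Suc i))"
  using two_full by (simp add: two_full_def in_W2_width_3_iff)

lemma row_card_sum_ge: "2 * h + 2 \<le> (\<Sum>i=1..h. row_card (word_row h W i))"
  using two_full_width_3_filled_count[OF height two_full] by (simp add: filled_count_width_3)

lemma tight_word_row:
  assumes "1 \<le> n" "n \<le> h"
  shows "4 \<le> row_card (word_row h W n) + tail_excess (word_row h W (n - 1)) (word_row h W n)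
    + tail_excess (word_row h W (Suc n)) (word_row h W n)"
  using row_tight[OF word_rows_admissible row_card_sum_ge assms] .

lemma first_rows: "(W 1 1 \<and> W 1 2 \<and> W 1 3) \<and> (W 2 1 \<and> \<not> W 2 2 \<and> W 2 3)"
proof -
  let ?r = "word_row h W"
  have r0: "?r 0 = empty_row"
    by (simp add: word_row_def)
  have "4 \<le> row_card (?r 1) + tail_excess empty_row (?r 1)"
    using prefix_tight[OF word_rows_admissible row_card_sum_ge, of 1] height r0 by simp
  then have r1: "?r 1 = (True, True, True)"
    by (rule tight_first_row)
  have "admissible_rows empty_row (True, True, True) (?r 2)"
    using bspec[OF word_rows_admissible, of 1] height r0 r1 by (simp add: numeral_2_eq_2)
  moreover have "6 \<le> row_card (?r 1) + row_card (?r 2) + tail_excess (?r 1) (?r 2)"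
    using prefix_tight[OF word_rows_admissible row_card_sum_ge, of 2] height
    by (simp add: numeral_2_eq_2)
  ultimately have "?r 2 = (True, False, True)"
    using r1 tight_second_row by simp
  then show ?thesis
    using r1 word_row_eq[of 1 h W] word_row_eq[of 2 h W] height by simp
qed

end

locale atomic_two_full_width_3 = two_full_width_3 +
  assumes atomic: "atomic h 3 W"
begin

lemma word_row_nonempty:
  assumes "i \<in> {1..h}"
  shows "word_row h W i \<noteq> empty_row"
proof -
  obtain j where "j \<in> {1..3}" "W i j"
    using atomic assms unfolding atomic_def by blast
  moreover have "j = 1 \<or> j = 2 \<or> j = 3"
    using \<open>j \<in> {1..3}\<close> by auto
  ultimately show ?thesis
    using assms by (auto simp: word_row_eq empty_row_def)
qed

lemma interior_row_card:
  assumes "1 < i" "i < h"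
  shows "row_card (word_row h W i) = 2"
proof -
  have "i - 1 \<in> {1..h}" "i \<in> {1..h}" "Suc i \<in> {1..h}"
    using assms by auto
  then show ?thesis
    using tight_interior_row_card[OF tight_word_row
        word_row_nonempty word_row_nonempty word_row_nonempty]
    by simp
qed

lemma interior_row_count:
  assumes "1 < i" "i < h"
  shows "row_count 3 W i = 2"
  using interior_row_card[OF assms] row_count_3_eq_row_card[of i h W] assms by simp

lemma no_square:
  assumes "1 < i" "i < h - 1" "j \<in> {1, 2}"
  shows "\<not> (W i j \<and> W i (j + 1) \<and> W (i + 1) j \<and> W (i + 1) (j + 1))"
proof -
  have "4 \<le> row_card (word_row h W (Suc i)) + tail_excess (word_row h W i) (word_row h W (Suc i))
      + tail_excess (word_row h W (Suc (Suc i))) (word_row h W (Suc i))"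
    using tight_word_row[of "Suc i"] assms by simp
  from tight_no_square[OF this interior_row_card interior_row_card word_row_eq word_row_eq]
  have no_squares: "\<not> (W i 1 \<and> W i 2 \<and> W (Suc i) 1 \<and> W (Suc i) 2)"
    "\<not> (W i 2 \<and> W i 3 \<and> W (Suc i) 2 \<and> W (Suc i) 3)"
    using assms by simp_all
  from assms(3) consider "j = 1" | "j = 2"
    by blast
  then show ?thesis
    using no_squares by cases (simp_all add: numeral_2_eq_2 numeral_3_eq_3)
qed

lemma no_side_gap:
  assumes "1 \<le> i" "i + 1 \<le> h" "j \<in> {1, 3}"
  shows "W i j \<or> W (i + 1) j"
proof (cases "i = 1")
  case True
  then show ?thesis
    using first_rows assms by auto
next
  case False
  have "4 \<le> row_card (word_row h W (Suc i)) + tail_excess (word_row h W i) (word_row h W (Suc i))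
      + tail_excess (word_row h W (Suc (Suc i))) (word_row h W (Suc i))"
    using tight_word_row[of "Suc i"] assms by simp
  from tight_no_side_gap[OF this interior_row_card word_row_nonempty word_row_eq word_row_eq]
  have no_gaps: "W i 1 \<or> W (Suc i) 1" "W i 3 \<or> W (Suc i) 3"
    using False assms by simp_all
  from assms(3) consider "j = 1" | "j = 3"
    by blast
  then show ?thesis
    using no_gaps by cases simp_all
qed

end

theorem mainTheorem4:
  fixes h :: nat and W :: word2d
  assumes "h \<ge> 3" and "two_full h 3 W"
  shows "((W 1 1 \<and> W 1 2 \<and> W 1 3) \<and> (W 2 1 \<and> \<not> W 2 2 \<and> W 2 3))
       \<and> (atomic h 3 W \<longrightarrow> (\<forall>i. 1 < i \<and> i < h \<longrightarrow> row_count 3 W i = 2))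
       \<and> (atomic h 3 W \<longrightarrow> \<not> (\<exists>i j. 1 < i \<and> i < h - 1 \<and> j \<in> {1, 2} \<and>
             W i j \<and> W i (j + 1) \<and> W (i + 1) j \<and> W (i + 1) (j + 1)))
       \<and> (atomic h 3 W \<longrightarrow> (\<forall>j \<in> {1, 3}.
             \<not> (\<exists>i. 1 \<le> i \<and> i + 1 \<le> h \<and> \<not> W i j \<and> \<not> W (i + 1) j)))"
proof -
  interpret two_full_width_3 h W
    using assms by unfold_locales
  have "(\<forall>i. 1 < i \<and> i < h \<longrightarrow> row_count 3 W i = 2)
      \<and> \<not> (\<exists>i j. 1 < i \<and> i < h - 1 \<and> j \<in> {1, 2} \<and>
             W i j \<and> W i (j + 1) \<and> W (i + 1) j \<and> W (i + 1) (j + 1))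
      \<and> (\<forall>j \<in> {1, 3}. \<not> (\<exists>i. 1 \<le> i \<and> i + 1 \<le> h \<and> \<not> W i j \<and> \<not> W (i + 1) j))"
    if "atomic h 3 W"
  proof -
    interpret atomic_two_full_width_3 h W
      using that by unfold_locales
    show ?thesis
      using interior_row_count no_square no_side_gap by blast
  qed
  then show ?thesis
    using first_rows by blast
qed

end
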